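(* Let $\pi,\tau\in S_n$ with $d(\pi,\tau)=t$, and let $\lambda=\lambda(\pi)$, $\mu=\lambda(\tau)$. Then \[\Delta(\lambda,\mu)\le t\sqrt{n/2}.\]
   Context: Permutations are written in one-line notation. For $\pi\in S_n$, $\lambda(\pi)$ denotes the shape of the tableaux associated with $\pi$ by the RSK correspondence. The distance $d(\pi,\tau)$ is the least number of adjacent transpositions $(k,k+1)$, $1\le k\le n-1$, whose successive left multiplication transforms $\pi$ into $\tau$. For partitions $\lambda,\mu$ of $n$ (parts padded with zeros), $\Delta(\lambda,\mu)=\frac12\sum_{i=1}^n|\lambda_i-\mu_i|$. *)

theory Defs
  imports "HOL-Combinatorics.Combinatorics" Complex_Main
begin

(* Permutations of {1..n} are functions nat => nat with  p permutes {1..n};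
   one-line notation of p is the list  map p [1..<n+1]. *)

definition one_line :: "nat \<Rightarrow> (nat \<Rightarrow> nat) \<Rightarrow> nat list" where
  "one_line n p = map p [1..<Suc n]"

fun row_ins :: "nat \<Rightarrow> nat list \<Rightarrow> nat list \<times> nat option" where
  "row_ins x [] = ([x], None)"
| "row_ins x (y # ys) =
     (if x < y then (x # ys, Some y)
      else (case row_ins x ys of (r, b) \<Rightarrow> (y # r, b)))"

(* insertion of x into a tableau given as list of rows (top row first) *)
fun tab_ins :: "nat \<Rightarrow> nat list list \<Rightarrow> nat list list" where
  "tab_ins x [] = [[x]]"
| "tab_ins x (r # rs) =
     (case row_ins x r of
        (r', None) \<Rightarrow> r' # rs
      | (r', Some y) \<Rightarrow> r' # tab_ins y rs)"

definition rsk_P :: "nat list \<Rightarrow> nat list list" where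
  "rsk_P w = foldl (\<lambda>T x. tab_ins x T) [] w"

definition rsk_shape :: "nat \<Rightarrow> (nat \<Rightarrow> nat) \<Rightarrow> nat list" where
  "rsk_shape n p = map length (rsk_P (one_line n p))"

definition part :: "nat list \<Rightarrow> nat \<Rightarrow> nat" where
  "part la i = (if i < length la then la ! i else 0)"

definition Delta :: "nat \<Rightarrow> nat list \<Rightarrow> nat list \<Rightarrow> real" where
  "Delta n la mu = (\<Sum>i<n. \<bar>real (part la i) - real (part mu i)\<bar>) / 2"

definition adj_dist :: "nat \<Rightarrow> (nat \<Rightarrow> nat) \<Rightarrow> (nat \<Rightarrow> nat) \<Rightarrow> nat" where
  "adj_dist n p q = (LEAST m. \<exists>ks. length ks = m \<and> (\<forall>k\<in>set ks. 1 \<le> k \<and> k \<le> n - 1) \<and>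
       foldl (\<lambda>f k. transpose k (Suc k) \<circ> f) p ks = q)"

end

theory Submission
  imports Defs
begin

text \<open>
  Let \<open>greene w j\<close> be the largest number of letters of \<open>w\<close> covered by \<open>j\<close> disjoint increasing
  subsequences. It is invariant under Knuth moves, and row insertion turns \<open>w\<close> into the reading
  word of its insertion tableau by Knuth moves; for a tableau the invariant is visibly the sum of
  the first \<open>j\<close> row lengths. Hence \<open>\<lambda>\<^sub>1 + \<dots> + \<lambda>\<^sub>j = greene w j\<close> (Greene's theorem).

  Left multiplication by \<open>(k, k+1)\<close> exchanges the letters \<open>k\<close> and \<open>k+1\<close> of the one-line word.
  This changes every \<open>greene w j\<close> by at most one, and all in the same direction, so the partial
  sums of the two shapes interlace. For two partitions of \<open>n\<close> with interlacing partial sums,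
  \<open>\<Sum>|\<lambda>\<^sub>i - \<mu>\<^sub>i| \<le> sqrt (2n)\<close>, which bounds a single step by \<open>sqrt (n/2)\<close>; the triangle
  inequality along \<open>t\<close> steps gives the theorem.
\<close>

definition increasing_in :: "nat list \<Rightarrow> nat set \<Rightarrow> bool" where
  "increasing_in w S \<longleftrightarrow> S \<subseteq> set w \<and>
     (\<forall>i j. i < j \<longrightarrow> j < length w \<longrightarrow> w!i \<in> S \<longrightarrow> w!j \<in> S \<longrightarrow> w!i < w!j)"

definition increasing_family :: "nat list \<Rightarrow> nat \<Rightarrow> (nat \<Rightarrow> nat set) \<Rightarrow> bool" where
  "increasing_family w j F \<longleftrightarrow>
     (\<forall>i<j. increasing_in w (F i)) \<and> (\<forall>i<j. \<forall>i'<j. i \<noteq> i' \<longrightarrow> F i \<inter> F i' = {})"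

definition greene :: "nat list \<Rightarrow> nat \<Rightarrow> nat" where
  "greene w j = Max ((\<lambda>F. card (\<Union>i<j. F i)) ` {F. increasing_family w j F})"

lemma increasing_in_subset: "increasing_in w S \<Longrightarrow> T \<subseteq> S \<Longrightarrow> increasing_in w T"
  unfolding increasing_in_def by blast

lemma increasing_in_Un:
  assumes "increasing_in w A" "increasing_in w B"
    and "\<And>i i'. i < length w \<Longrightarrow> i' < length w \<Longrightarrow> w!i \<in> A \<Longrightarrow> w!i' \<in> B \<Longrightarrow> i < i' \<and> w!i < w!i'"
  shows "increasing_in w (A \<union> B)"
  unfolding increasing_in_def
proof (intro conjI allI impI)
  show "A \<union> B \<subseteq> set w" using assms(1,2) unfolding increasing_in_def by blast
next
  fix i i' assume ii': "i < i'" "i' < length w" "w!i \<in> A \<union> B" "w!i' \<in> A \<union> B"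
  then have "i < length w" by simp
  with ii' assms show "w!i < w!i'"
    unfolding increasing_in_def by (metis Un_iff not_less_iff_gr_or_eq)
qed

lemma increasing_in_index_le_iff:
  assumes "increasing_in w S" "distinct w" "i < length w" "i' < length w" "w!i \<in> S" "w!i' \<in> S"
  shows "i \<le> i' \<longleftrightarrow> w!i \<le> w!i'"
  using assms unfolding increasing_in_def
  by (metis le_less less_le_not_le linorder_neqE_nat nth_eq_iff_index_eq)

lemma increasing_in_index_less_iff:
  assumes "increasing_in w S" "distinct w" "i < length w" "i' < length w" "w!i \<in> S" "w!i' \<in> S"
  shows "i < i' \<longleftrightarrow> w!i < w!i'"
  using increasing_in_index_le_iff[OF assms(1,2,4,3,6,5)] by linarith

lemma increasing_family_Union_subset:
  "increasing_family w j F \<Longrightarrow> (\<Union>i<j. F i) \<subseteq> set w"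
  by (auto simp: increasing_family_def increasing_in_def)

lemma increasing_family_card_le:
  "increasing_family w j F \<Longrightarrow> card (\<Union>i<j. F i) \<le> length w"
  using card_mono[OF _ increasing_family_Union_subset] card_length le_trans by blast

lemma finite_greene_candidates:
  "finite ((\<lambda>F. card (\<Union>i<j. F i)) ` {F. increasing_family w j F})"
  by (rule finite_subset[of _ "{..length w}"]) (auto dest: increasing_family_card_le)

lemma greene_ge: "increasing_family w j F \<Longrightarrow> card (\<Union>i<j. F i) \<le> greene w j"
  unfolding greene_def by (rule Max_ge[OF finite_greene_candidates]) auto

lemma greene_attained: "\<exists>F. increasing_family w j F \<and> card (\<Union>i<j. F i) = greene w j"
proof -
  have "increasing_family w j (\<lambda>_. {})"
    by (auto simp: increasing_family_def increasing_in_def)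
  then have "greene w j \<in> (\<lambda>F. card (\<Union>i<j. F i)) ` {F. increasing_family w j F}"
    unfolding greene_def by (intro Max_in[OF finite_greene_candidates]) auto
  then show ?thesis by auto
qed

lemma greene_le_add_by_transfer:
  assumes "\<And>F. increasing_family w j F \<Longrightarrow>
    \<exists>F'. increasing_family w' j F' \<and> card (\<Union>i<j. F i) \<le> card (\<Union>i<j. F' i) + c"
  shows "greene w j \<le> greene w' j + c"
proof -
  obtain F where F: "increasing_family w j F" "card (\<Union>i<j. F i) = greene w j"
    using greene_attained by blast
  with assms[OF F(1)] greene_ge show ?thesis by (metis add_le_mono1 le_trans)
qed

lemma greene_le_by_transfer:
  assumes "\<And>F. increasing_family w j F \<Longrightarrow>
    \<exists>F'. increasing_family w' j F' \<and> card (\<Union>i<j. F i) \<le> card (\<Union>i<j. F' i)"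
  shows "greene w j \<le> greene w' j"
  using greene_le_add_by_transfer[of w j w' 0] assms by simp

lemma increasing_family_update:
  assumes "increasing_family w j F" "i0 < j" "increasing_in w C"
    and "\<And>i. i < j \<Longrightarrow> i \<noteq> i0 \<Longrightarrow> C \<inter> F i = {}"
  shows "increasing_family w j (F(i0 := C))"
  using assms unfolding increasing_family_def by (auto simp: Int_commute)

lemma increasing_family_update2:
  assumes F: "increasing_family w j F" and "i0 < j" "i1 < j" "i0 \<noteq> i1"
    and "increasing_in w C" "increasing_in w D" "C \<inter> D = {}" "C \<union> D \<subseteq> F i0 \<union> F i1"
  shows "increasing_family w j (F(i0 := C, i1 := D))"
proof -
  have "\<And>i. i < j \<Longrightarrow> i \<noteq> i0 \<Longrightarrow> i \<noteq> i1 \<Longrightarrow> (C \<union> D) \<inter> F i = {}"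
    using F assms(2-4,8) unfolding increasing_family_def by blast
  then show ?thesis
    using assms unfolding increasing_family_def by (simp add: Int_commute) blast
qed

lemma increasing_in_singleton: "distinct w \<Longrightarrow> v \<in> set w \<Longrightarrow> increasing_in w {v}"
  unfolding increasing_in_def by (auto simp: nth_eq_iff_index_eq)

lemma permute_list_adjacent_nth:
  assumes "Suc p < length w" "i < length w"
  shows "permute_list (transpose p (Suc p)) w ! i = w ! transpose p (Suc p) i"
  using assms by (intro permute_list_nth permutes_swap_id) auto

lemma permute_list_adjacent_involution:
  assumes "Suc p < length w"
  shows "permute_list (transpose p (Suc p)) (permute_list (transpose p (Suc p)) w) = w"
  using permute_list_compose[symmetric, of "transpose p (Suc p)" w "transpose p (Suc p)"] assms
  by (simp add: permutes_swap_id)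

lemma permute_list_adjacent_append:
  "permute_list (transpose (length u) (Suc (length u))) (u @ a # b # v) = u @ b # a # v"
proof (rule nth_equalityI)
  fix i assume "i < length (permute_list (transpose (length u) (Suc (length u))) (u @ a # b # v))"
  then have i: "i < length (u @ a # b # v)" by simp
  then consider "i < length u" | "i = length u" | "i = Suc (length u)" | "Suc (length u) < i"
    by linarith
  then show "permute_list (transpose (length u) (Suc (length u))) (u @ a # b # v) ! i = (u @ b # a # v) ! i"
    using permute_list_adjacent_nth[OF _ i] i
    by cases (auto simp: nth_append transpose_def nth_Cons' split: if_splits)
qed simp

lemma increasing_in_permute_adjacent:
  assumes "Suc p < length w" "\<not> (w!p \<in> S \<and> w!Suc p \<in> S)" "increasing_in w S"
  shows "increasing_in (permute_list (transpose p (Suc p)) w) S"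
  unfolding increasing_in_def
proof (intro conjI allI impI)
  let ?t = "transpose p (Suc p)" and ?w' = "permute_list (transpose p (Suc p)) w"
  have t_less: "\<And>i. i < length w \<Longrightarrow> ?t i < length w"
    using assms(1) by (auto simp: transpose_def)
  show "S \<subseteq> set ?w'"
    using assms unfolding increasing_in_def by (simp add: permutes_swap_id)
  fix i i' assume ii': "i < i'" "i' < length ?w'" "?w'!i \<in> S" "?w'!i' \<in> S"
  then have nth: "?w'!i = w!(?t i)" "?w'!i' = w!(?t i')"
    using permute_list_adjacent_nth[OF assms(1)] by auto
  show "?w'!i < ?w'!i'"
  proof (cases "i = p \<and> i' = Suc p")
    case True
    then show ?thesis using assms(2) ii' nth by auto
  next
    case False
    then have "?t i < ?t i'" using ii' by (auto simp: transpose_def)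
    then show ?thesis using assms(3) ii' t_less nth unfolding increasing_in_def by auto
  qed
qed

locale ascent_swap =
  fixes w :: "nat list" and p :: nat
  assumes Suc_p_less: "Suc p < length w"
    and distinct_w: "distinct w"
    and ascent: "w!p < w!Suc p"
begin

abbreviation "w' \<equiv> permute_list (transpose p (Suc p)) w"
abbreviation "x \<equiv> w!p"
abbreviation "z \<equiv> w!Suc p"

lemma w'_p: "w'!p = z" "w'!Suc p = x"
  using permute_list_adjacent_nth[OF Suc_p_less] Suc_p_less by auto

lemma increasing_in_w'_iff:
  assumes "\<not> (x \<in> S \<and> z \<in> S)"
  shows "increasing_in w' S \<longleftrightarrow> increasing_in w S"
  using increasing_in_permute_adjacent[OF Suc_p_less] increasing_in_permute_adjacent[of p w' S]
    assms Suc_p_less w'_p permute_list_adjacent_involution[OF Suc_p_less]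
  by auto

lemma increasing_family_w':
  "increasing_family w j F \<Longrightarrow> \<forall>i<j. \<not> (x \<in> F i \<and> z \<in> F i) \<Longrightarrow> increasing_family w' j F"
  using increasing_in_w'_iff unfolding increasing_family_def by blast

lemma greene_w'_le: "greene w' j \<le> greene w j"
proof (rule greene_le_by_transfer)
  fix F assume F: "increasing_family w' j F"
  have "\<not> (x \<in> F i \<and> z \<in> F i)" if "i < j" for i
    using F that w'_p ascent Suc_p_less
    unfolding increasing_family_def increasing_in_def by (metis length_permute_list lessI less_asym)
  with F have "increasing_family w j F"
    using increasing_in_w'_iff unfolding increasing_family_def by blast
  then show "\<exists>F'. increasing_family w j F' \<and> card (\<Union>i<j. F i) \<le> card (\<Union>i<j. F' i)"
    by auto
qed

end

locale knuth_triple = ascent_swap +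
  fixes q :: nat
  assumes p_eq: "p = Suc q"
    and x_less_y: "x < w!q" and y_less_z: "w!q < z"
begin

abbreviation "y \<equiv> w!q"

lemma p_less: "p < length w" and q_less: "q < length w"
  using Suc_p_less p_eq by auto

lemma increasing_gap:
  assumes C: "increasing_in w C" and "x \<in> C" "z \<in> C" "c \<in> C"
  shows "c \<le> x \<or> z \<le> c"
proof (rule ccontr)
  assume c: "\<not> (c \<le> x \<or> z \<le> c)"
  obtain k where k: "k < length w" "w!k = c"
    using C \<open>c \<in> C\<close> unfolding increasing_in_def by (metis in_set_conv_nth subsetD)
  have "p < k" "k < Suc p"
    using increasing_in_index_less_iff[OF C distinct_w] p_less Suc_p_less k c assms(2-4) by auto
  then show False by simp
qed

lemma increasing_exchange_left:
  assumes C: "increasing_in w C" and D: "increasing_in w D"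
    and "x \<in> C" "y \<in> D" "C \<inter> D = {}"
  shows "increasing_in w ({c\<in>C. c \<le> x} \<union> {d\<in>D. y < d})"
proof (rule increasing_in_Un)
  show "increasing_in w {c\<in>C. c \<le> x}" "increasing_in w {d\<in>D. y < d}"
    using C D by (auto intro: increasing_in_subset)
  fix k k' assume k: "k < length w" "k' < length w" "w!k \<in> {c\<in>C. c \<le> x}" "w!k' \<in> {d\<in>D. y < d}"
  have "k \<le> p" using increasing_in_index_le_iff[OF C distinct_w k(1) p_less] k assms(3) by simp
  moreover have "q < k'" using increasing_in_index_less_iff[OF D distinct_w q_less k(2)] k assms(4) by simp
  moreover have "k' \<noteq> p" using k assms(3,5) by auto
  ultimately show "k < k' \<and> w!k < w!k'" using k x_less_y p_eq by auto
qed

lemma increasing_exchange_right: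
  assumes C: "increasing_in w C" and D: "increasing_in w D"
    and "z \<in> C" "y \<in> D"
  shows "increasing_in w ({d\<in>D. d \<le> y} \<union> {c\<in>C. z \<le> c})"
proof (rule increasing_in_Un)
  show "increasing_in w {d\<in>D. d \<le> y}" "increasing_in w {c\<in>C. z \<le> c}"
    using C D by (auto intro: increasing_in_subset)
  fix k k' assume k: "k < length w" "k' < length w" "w!k \<in> {d\<in>D. d \<le> y}" "w!k' \<in> {c\<in>C. z \<le> c}"
  have "k \<le> q" using increasing_in_index_le_iff[OF D distinct_w k(1) q_less] k assms(4) by simp
  moreover have "Suc p \<le> k'"
    using increasing_in_index_le_iff[OF C distinct_w Suc_p_less k(2)] k assms(3) by simp
  ultimately show "k < k' \<and> w!k < w!k'" using k y_less_z p_eq by auto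
qed

lemma increasing_exchange_insert:
  assumes C: "increasing_in w C" and "x \<in> C" "z \<in> C" "y \<notin> C"
  shows "increasing_in w (insert y (C - {x}))"
proof -
  have left: "increasing_in w ({c\<in>C. c < x} \<union> {y})"
  proof (rule increasing_in_Un)
    show "increasing_in w {c\<in>C. c < x}" using C by (auto intro: increasing_in_subset)
    show "increasing_in w {y}" using q_less by (auto intro: increasing_in_singleton distinct_w)
    fix k k' assume k: "k < length w" "k' < length w" "w!k \<in> {c\<in>C. c < x}" "w!k' \<in> {y}"
    have "k < p" using increasing_in_index_less_iff[OF C distinct_w k(1) p_less] k assms(2) by simp
    moreover have "k \<noteq> q" "k' = q" using k assms(4) q_less distinct_w nth_eq_iff_index_eq by auto
    ultimately show "k < k' \<and> w!k < w!k'" using k x_less_y p_eq by auto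
  qed
  have "increasing_in w (({c\<in>C. c < x} \<union> {y}) \<union> {c\<in>C. z \<le> c})"
  proof (rule increasing_in_Un[OF left])
    show "increasing_in w {c\<in>C. z \<le> c}" using C by (auto intro: increasing_in_subset)
    fix k k' assume k: "k < length w" "k' < length w"
      "w!k \<in> {c\<in>C. c < x} \<union> {y}" "w!k' \<in> {c\<in>C. z \<le> c}"
    have "w!k < z" using k x_less_y y_less_z by auto
    moreover have "Suc p \<le> k'"
      using increasing_in_index_le_iff[OF C distinct_w Suc_p_less k(2)] k assms(3) by simp
    moreover have "k < Suc p"
    proof (cases "w!k = y")
      case True
      then have "k = q" using nth_eq_iff_index_eq[OF distinct_w k(1) q_less] by simp
      then show ?thesis using p_eq by simp
    next
      case False
      then show ?thesis
        using increasing_in_index_less_iff[OF C distinct_w k(1) p_less] k assms(2) by auto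
    qed
    ultimately show "k < k' \<and> w!k < w!k'" using k by auto
  qed
  moreover have "insert y (C - {x}) = ({c\<in>C. c < x} \<union> {y}) \<union> {c\<in>C. z \<le> c}"
    using increasing_gap[OF C assms(2,3)] ascent by force
  ultimately show ?thesis by simp
qed

text \<open>
  If \<open>x, z \<in> C\<close> and \<open>y \<in> D\<close>, cut \<open>C\<close> after \<open>x\<close> and \<open>D\<close> after \<open>y\<close> and exchange the tails; if no
  member contains \<open>y\<close>, let \<open>y\<close> take the place of \<open>x\<close> in \<open>C\<close>. Either way no member contains both
  \<open>x\<close> and \<open>z\<close> any more, so the family survives the swap of \<open>x\<close> and \<open>z\<close>.
\<close>

lemma family_exchange_two:
  assumes F: "increasing_family w j F" and i0: "i0 < j" "x \<in> F i0" "z \<in> F i0"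
    and i1: "i1 < j" "y \<in> F i1"
  shows "\<exists>F'. increasing_family w' j F' \<and> (\<Union>i<j. F' i) = (\<Union>i<j. F i)"
proof -
  define C D where "C = F i0" and "D = F i1"
  have C: "increasing_in w C" and D: "increasing_in w D"
    using F i0 i1 unfolding increasing_family_def C_def D_def by auto
  have "i1 \<noteq> i0"
  proof
    assume "i1 = i0"
    then have "y < x"
      using increasing_in_index_less_iff[OF C distinct_w q_less p_less] i0 i1 p_eq
      unfolding C_def by simp
    with x_less_y show False by simp
  qed
  then have CD: "C \<inter> D = {}" using F i0 i1 unfolding increasing_family_def C_def D_def by blast
  have gap: "\<forall>c\<in>C. c \<le> x \<or> z \<le> c" using increasing_gap[OF C] i0 unfolding C_def by blast
  define C' D' where "C' = {c\<in>C. c \<le> x} \<union> {d\<in>D. y < d}" and "D' = {d\<in>D. d \<le> y} \<union> {c\<in>C. z \<le> c}"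
  have C'D': "C' \<union> D' = C \<union> D" "C' \<inter> D' = {}"
    using gap CD ascent unfolding C'_def D'_def by auto
  define F' where "F' = F(i0 := C', i1 := D')"
  have "increasing_family w j F'"
    unfolding F'_def
  proof (rule increasing_family_update2[OF F i0(1) i1(1) \<open>i1 \<noteq> i0\<close>[symmetric]])
    show "increasing_in w C'" "increasing_in w D'"
      unfolding C'_def D'_def
      using increasing_exchange_left[OF C D _ _ CD] increasing_exchange_right[OF C D] i0 i1
      unfolding C_def D_def by auto
  qed (use C'D' in \<open>auto simp: C_def D_def\<close>)
  moreover have "\<not> (x \<in> F' i \<and> z \<in> F' i)" if "i < j" for i
  proof -
    have "x \<notin> D' \<and> z \<notin> C'" using CD i0 ascent x_less_y unfolding C'_def D'_def C_def by auto
    moreover have "x \<notin> F i" if "i \<noteq> i0" "i < j" for i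
      using F i0 that unfolding increasing_family_def by blast
    ultimately show ?thesis using \<open>i < j\<close> unfolding F'_def by auto
  qed
  moreover have "(\<Union>i<j. F' i) = (\<Union>i<j. F i)"
    using C'D'(1) i0(1) i1(1) \<open>i1 \<noteq> i0\<close> unfolding F'_def C_def D_def by (auto split: if_splits)
  ultimately show ?thesis using increasing_family_w' by blast
qed

lemma family_exchange_one:
  assumes F: "increasing_family w j F" and i0: "i0 < j" "x \<in> F i0" "z \<in> F i0"
    and y: "\<forall>i<j. y \<notin> F i"
  shows "\<exists>F'. increasing_family w' j F' \<and> card (\<Union>i<j. F' i) = card (\<Union>i<j. F i)"
proof -
  define F' where "F' = F(i0 := insert y (F i0 - {x}))"
  have others: "x \<notin> F i \<and> z \<notin> F i" if "i < j" "i \<noteq> i0" for i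
    using F i0 that unfolding increasing_family_def by blast
  have "increasing_family w j F'"
    unfolding F'_def
  proof (rule increasing_family_update[OF F i0(1)])
    show "increasing_in w (insert y (F i0 - {x}))"
      using increasing_exchange_insert F i0 y unfolding increasing_family_def by blast
    show "insert y (F i0 - {x}) \<inter> F i = {}" if "i < j" "i \<noteq> i0" for i
      using F i0(1) y that unfolding increasing_family_def by blast
  qed
  moreover have "\<not> (x \<in> F' i \<and> z \<in> F' i)" if "i < j" for i
    using that others x_less_y unfolding F'_def by auto
  moreover have "card (\<Union>i<j. F' i) = card (\<Union>i<j. F i)"
  proof -
    let ?U = "\<Union>i<j. F i"
    have "(\<Union>i<j. F' i) = insert y (?U - {x})"
      using i0 others y unfolding F'_def by (auto split: if_splits)
    moreover have "finite ?U"
      using increasing_family_Union_subset[OF F] finite_subset by blast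
    moreover have "x \<in> ?U" "y \<notin> ?U" using i0 y by auto
    ultimately show ?thesis by (metis DiffD1 card_Suc_Diff1 card_insert_disjoint finite_Diff)
  qed
  ultimately show ?thesis using increasing_family_w' by blast
qed

lemma greene_le_w': "greene w j \<le> greene w' j"
proof (rule greene_le_by_transfer)
  fix F assume F: "increasing_family w j F"
  have "\<exists>F'. increasing_family w' j F' \<and> card (\<Union>i<j. F' i) = card (\<Union>i<j. F i)"
  proof (cases "\<exists>i0<j. x \<in> F i0 \<and> z \<in> F i0")
    case False
    then show ?thesis using increasing_family_w'[OF F] by blast
  next
    case True
    then obtain i0 where i0: "i0 < j" "x \<in> F i0" "z \<in> F i0" by blast
    show ?thesis
    proof (cases "\<exists>i1<j. y \<in> F i1")
      case True
      then show ?thesis using family_exchange_two[OF F i0] by metis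
    next
      case False
      then show ?thesis using family_exchange_one[OF F i0] by blast
    qed
  qed
  then show "\<exists>F'. increasing_family w' j F' \<and> card (\<Union>i<j. F i) \<le> card (\<Union>i<j. F' i)"
    by (metis order_refl)
qed

end

lemma greene_knuth_middle_first:
  assumes "distinct (u @ [y, x, z] @ v)" "x < y" "y < z"
  shows "greene (u @ [y, x, z] @ v) j = greene (u @ [y, z, x] @ v) j"
proof -
  interpret knuth_triple "u @ [y, x, z] @ v" "Suc (length u)" "length u"
    using assms by unfold_locales (auto simp: nth_append)
  have "permute_list (transpose (Suc (length u)) (Suc (Suc (length u)))) (u @ [y, x, z] @ v)
      = u @ [y, z, x] @ v"
    using permute_list_adjacent_append[of "u @ [y]" x z v] by simp
  then show ?thesis using greene_le_w' greene_w'_le by (metis le_antisym)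
qed

lemma increasing_in_rev_compl:
  assumes bound: "\<forall>v\<in>set w. v \<le> M" and S: "increasing_in w S"
  shows "increasing_in (rev (map (\<lambda>v. M - v) w)) ((\<lambda>v. M - v) ` S)"
  unfolding increasing_in_def
proof (intro conjI allI impI)
  show "(\<lambda>v. M - v) ` S \<subseteq> set (rev (map (\<lambda>v. M - v) w))"
    using S unfolding increasing_in_def by auto
  let ?w = "rev (map (\<lambda>v. M - v) w)"
  have from_compl: "w!k \<in> S" if k: "k < length w" and mem: "M - w!k \<in> (\<lambda>v. M - v) ` S" for k
  proof -
    obtain s where "s \<in> S" "M - w!k = M - s" using mem by blast
    moreover have "s \<le> M" "w!k \<le> M" using S bound k \<open>s \<in> S\<close> unfolding increasing_in_def by auto
    ultimately show ?thesis by (metis diff_diff_cancel)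
  qed
  fix i i' assume ii': "i < i'" "i' < length ?w" "?w!i \<in> (\<lambda>v. M - v) ` S" "?w!i' \<in> (\<lambda>v. M - v) ` S"
  define a b where "a = length w - Suc i'" and "b = length w - Suc i"
  have ab: "a < b" "b < length w" "?w!i = M - w!b" "?w!i' = M - w!a"
    using ii' by (auto simp: a_def b_def rev_nth)
  then have "w!a < w!b" using S from_compl ii'(3,4) unfolding increasing_in_def by auto
  moreover have "w!b \<le> M" using bound ab(2) by simp
  ultimately show "?w!i < ?w!i'" using ab(3,4) by linarith
qed

lemma greene_le_rev_compl:
  assumes "\<forall>v\<in>set w. v \<le> M"
  shows "greene w j \<le> greene (rev (map (\<lambda>v. M - v) w)) j"
proof (rule greene_le_by_transfer)
  let ?c = "\<lambda>v::nat. M - v"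
  have inj: "inj_on ?c (set w)" using assms by (intro inj_onI) (metis diff_diff_cancel)
  fix F assume F: "increasing_family w j F"
  have "increasing_family (rev (map ?c w)) j (\<lambda>i. ?c ` F i)"
    unfolding increasing_family_def
  proof (intro conjI allI impI)
    fix i assume "i < j"
    then show "increasing_in (rev (map ?c w)) (?c ` F i)"
      using F assms increasing_in_rev_compl unfolding increasing_family_def by blast
  next
    fix i i' assume "i < j" "i' < j" "i \<noteq> i'"
    then have "F i \<inter> F i' = {}" "F i \<subseteq> set w" "F i' \<subseteq> set w"
      using F unfolding increasing_family_def increasing_in_def by auto
    then show "?c ` F i \<inter> ?c ` F i' = {}"
      by (simp flip: inj_on_image_Int[OF inj])
  qed
  moreover have "card (\<Union>i<j. ?c ` F i) = card (\<Union>i<j. F i)"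
    unfolding image_UN[symmetric]
    using inj increasing_family_Union_subset[OF F] by (meson card_image inj_on_subset)
  ultimately show "\<exists>F'. increasing_family (rev (map ?c w)) j F' \<and>
      card (\<Union>i<j. F i) \<le> card (\<Union>i<j. F' i)"
    by auto
qed

lemma greene_rev_compl:
  assumes "\<forall>v\<in>set w. v \<le> M"
  shows "greene (rev (map (\<lambda>v. M - v) w)) j = greene w j"
proof -
  have "rev (map (\<lambda>v. M - v) (rev (map (\<lambda>v. M - v) w))) = w"
    using assms by (simp add: rev_map map_idI)
  moreover have "greene (rev (map (\<lambda>v. M - v) w)) j
      \<le> greene (rev (map (\<lambda>v. M - v) (rev (map (\<lambda>v. M - v) w)))) j"
    by (rule greene_le_rev_compl) auto
  ultimately show ?thesis using greene_le_rev_compl[OF assms, of j] by simp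
qed

text \<open>The second kind of Knuth move is the first one seen through reversal and complementation.\<close>

lemma greene_knuth_middle_last:
  assumes "distinct (u @ [x, z, y] @ v)" "x < y" "y < z"
  shows "greene (u @ [x, z, y] @ v) j = greene (u @ [z, x, y] @ v) j"
proof -
  define M where "M = Max (set (u @ [x, z, y] @ v))"
  let ?c = "\<lambda>v::nat. M - v"
  have "\<forall>a\<in>set (u @ [x, z, y] @ v). a \<le> M"
    unfolding M_def using Max_ge[OF finite_set] by blast
  moreover have "set (u @ [z, x, y] @ v) = set (u @ [x, z, y] @ v)" by auto
  ultimately have bound: "\<forall>a\<in>set (u @ [x, z, y] @ v). a \<le> M" "\<forall>a\<in>set (u @ [z, x, y] @ v). a \<le> M"
    by simp_all
  have "z \<le> M" using bound(1) by simp
  then have "?c z < ?c y" "?c y < ?c x" using assms(2,3) by linarith+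
  moreover have "inj_on ?c (set (u @ [x, z, y] @ v))"
    using bound(1) by (intro inj_onI) (metis diff_diff_cancel)
  then have "distinct (rev (map ?c (u @ [x, z, y] @ v)))"
    using assms(1) by (simp only: distinct_rev distinct_map)
  moreover have "rev (map ?c (u @ [x, z, y] @ v)) = rev (map ?c v) @ [?c y, ?c z, ?c x] @ rev (map ?c u)"
    by simp
  ultimately have "greene (rev (map ?c v) @ [?c y, ?c z, ?c x] @ rev (map ?c u)) j
      = greene (rev (map ?c v) @ [?c y, ?c x, ?c z] @ rev (map ?c u)) j"
    using greene_knuth_middle_first by simp
  then show ?thesis
    using greene_rev_compl[OF bound(1), of j] greene_rev_compl[OF bound(2), of j] by simp
qed

inductive knuth_step :: "nat list \<Rightarrow> nat list \<Rightarrow> bool" where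
  middle_first: "x < y \<Longrightarrow> y < z \<Longrightarrow> knuth_step (u @ [y, z, x] @ v) (u @ [y, x, z] @ v)"
| middle_last: "x < y \<Longrightarrow> y < z \<Longrightarrow> knuth_step (u @ [x, z, y] @ v) (u @ [z, x, y] @ v)"

abbreviation knuth_steps :: "nat list \<Rightarrow> nat list \<Rightarrow> bool" where
  "knuth_steps \<equiv> knuth_step\<^sup>*\<^sup>*"

lemma knuth_step_mset: "knuth_step w w' \<Longrightarrow> mset w' = mset w"
  by (induction rule: knuth_step.induct) auto

lemma knuth_step_greene: "knuth_step w w' \<Longrightarrow> distinct w \<Longrightarrow> greene w' j = greene w j"
proof (induction rule: knuth_step.induct)
  case (middle_first x y z u v)
  then show ?case using greene_knuth_middle_first[of u y x z v j] by auto
next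
  case (middle_last x y z u v)
  then show ?case using greene_knuth_middle_last[of u x z y v j] by auto
qed

lemma knuth_step_append: "knuth_step w w' \<Longrightarrow> knuth_step (a @ w @ b) (a @ w' @ b)"
proof (induction rule: knuth_step.induct)
  case (middle_first x y z u v)
  then show ?case using knuth_step.middle_first[of x y z "a @ u" "v @ b"] by simp
next
  case (middle_last x y z u v)
  then show ?case using knuth_step.middle_last[of x y z "a @ u" "v @ b"] by simp
qed

lemma knuth_steps_mset: "knuth_steps w w' \<Longrightarrow> mset w' = mset w"
proof (induction rule: rtranclp_induct)
  case (step w' w'')
  then show ?case using knuth_step_mset by simp
qed simp

lemma knuth_steps_greene: "knuth_steps w w' \<Longrightarrow> distinct w \<Longrightarrow> greene w' j = greene w j"
proof (induction rule: rtranclp_induct)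
  case (step w' w'')
  then have "distinct w'" using knuth_steps_mset mset_eq_imp_distinct_iff by metis
  then show ?case using step knuth_step_greene by simp
qed simp

lemma knuth_steps_append: "knuth_steps w w' \<Longrightarrow> knuth_steps (a @ w @ b) (a @ w' @ b)"
proof (induction rule: rtranclp_induct)
  case (step w' w'')
  then show ?case using knuth_step_append rtranclp.rtrancl_into_rtrancl by metis
qed simp

lemma row_ins_None:
  assumes "row_ins x r = (r', None)" "x \<notin> set r"
  shows "r' = r @ [x] \<and> (\<forall>e\<in>set r. e < x)"
proof -
  have "r' = r @ [x] \<and> (\<forall>e\<in>set r. \<not> x < e)"
    using assms(1) by (induction x r arbitrary: r' rule: row_ins.induct) (auto split: if_splits prod.splits)
  then show ?thesis using assms(2) by (metis linorder_neqE_nat)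
qed

lemma row_ins_Some:
  assumes "row_ins x r = (r', Some y)" "x \<notin> set r"
  shows "\<exists>a b. r = a @ y # b \<and> r' = a @ x # b \<and> (\<forall>e\<in>set a. e < x) \<and> x < y"
  using assms
proof (induction x r arbitrary: r' rule: row_ins.induct)
  case (2 x y' ys)
  show ?case
  proof (cases "x < y'")
    case True
    then show ?thesis using 2(2) by (intro exI[of _ "[]"] exI[of _ ys]) auto
  next
    case False
    obtain r b where rb: "row_ins x ys = (r, b)" by fastforce
    then have "r' = y' # r" "b = Some y" using 2(2) False by auto
    then obtain a c where "ys = a @ y # c" "r = a @ x # c" "\<forall>e\<in>set a. e < x" "x < y"
      using 2(1)[OF False] rb 2(3) by auto
    moreover have "y' < x" using False 2(3) by auto
    ultimately show ?thesis using \<open>r' = y' # r\<close> by (intro exI[of _ "y' # a"] exI[of _ c]) auto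
  qed
qed simp

lemma row_ins_sorted:
  assumes "sorted_wrt (<) r" "x \<notin> set r" "row_ins x r = (r', b)"
  shows "sorted_wrt (<) r'"
proof (cases b)
  case None
  then show ?thesis using row_ins_None[OF _ assms(2)] assms(1,3) by (auto simp: sorted_wrt_append)
next
  case (Some y)
  then obtain a c where "r = a @ y # c" "r' = a @ x # c" "\<forall>e\<in>set a. e < x" "x < y"
    using row_ins_Some assms(2,3) by blast
  then show ?thesis using assms(1) by (auto simp: sorted_wrt_append)
qed

lemma knuth_steps_move_small_left:
  assumes "sorted_wrt (<) (l # b)" "x < l"
  shows "knuth_steps (u @ l # b @ [x]) (u @ l # x # b)"
  using assms
proof (induction b rule: rev_induct)
  case (snoc c b)
  obtain a m where am: "l # b = a @ [m]" by (metis rev_exhaust list.distinct(1))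
  have "m \<in> set (l # b)" using am by simp
  then have "x < m" "m < c" using snoc.prems by (auto simp: sorted_wrt_append)
  then have "knuth_step ((u @ a) @ [m, c, x] @ []) ((u @ a) @ [m, x, c] @ [])"
    by (rule knuth_step.middle_first)
  moreover have "u @ l # (b @ [c]) @ [x] = (u @ a) @ [m, c, x] @ []"
    "(u @ a) @ [m, x, c] @ [] = (u @ l # b @ [x]) @ [c]"
    using am by (simp_all add: append_Cons[symmetric] del: append_Cons)
  ultimately have "knuth_steps (u @ l # (b @ [c]) @ [x]) ((u @ l # b @ [x]) @ [c])"
    by (metis r_into_rtranclp)
  moreover have "knuth_steps ((u @ l # b @ [x]) @ [c]) ((u @ l # x # b) @ [c])"
    using knuth_steps_append[OF snoc.IH, of "[]" "[c]"] snoc.prems by (simp add: sorted_wrt_append)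
  ultimately show ?case by simp
qed simp

lemma knuth_steps_move_large_left:
  assumes "sorted_wrt (<) a" "\<forall>e\<in>set a. e < x" "x < y"
  shows "knuth_steps (u @ a @ [y, x]) (u @ y # a @ [x])"
  using assms
proof (induction a arbitrary: x rule: rev_induct)
  case (snoc c a)
  have "c < x" using snoc.prems by auto
  then have "knuth_step ((u @ a) @ [c, y, x] @ []) ((u @ a) @ [y, c, x] @ [])"
    using snoc.prems(3) by (rule knuth_step.middle_last)
  then have "knuth_steps (u @ (a @ [c]) @ [y, x]) ((u @ a @ [y, c]) @ [x])" by auto
  moreover have "knuth_steps (u @ a @ [y, c]) (u @ y # a @ [c])"
    using snoc.IH snoc.prems \<open>c < x\<close> by (auto simp: sorted_wrt_append)
  then have "knuth_steps ((u @ a @ [y, c]) @ [x]) ((u @ y # a @ [c]) @ [x])"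
    using knuth_steps_append[of _ _ "[]" "[x]"] by (metis append_Nil)
  ultimately show ?case by simp
qed simp

lemma row_ins_knuth_steps:
  assumes "sorted_wrt (<) r" "x \<notin> set r" "row_ins x r = (r', Some y)"
  shows "knuth_steps (r @ [x]) (y # r')"
proof -
  obtain a b where ab: "r = a @ y # b" "r' = a @ x # b" "\<forall>e\<in>set a. e < x" "x < y"
    using row_ins_Some assms(2,3) by blast
  have "knuth_steps (a @ y # b @ [x]) (a @ y # x # b)"
    using assms(1) ab by (intro knuth_steps_move_small_left) (auto simp: sorted_wrt_append)
  moreover have "knuth_steps ([] @ a @ [y, x]) ([] @ y # a @ [x])"
    using assms(1) ab by (intro knuth_steps_move_large_left) (auto simp: sorted_wrt_append)
  then have "knuth_steps ((a @ [y, x]) @ b) ((y # a @ [x]) @ b)"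
    using knuth_steps_append[of _ _ "[]" b] by (metis append_Nil)
  ultimately show ?thesis using ab by simp
qed

definition reading :: "nat list list \<Rightarrow> nat list" where
  "reading T = concat (rev T)"

lemma reading_Cons [simp]: "reading (r # T) = reading T @ r"
  by (simp add: reading_def)

lemma reading_append [simp]: "reading (T @ T') = reading T' @ reading T"
  by (simp add: reading_def)

lemma tab_ins_knuth_steps:
  assumes "\<forall>r\<in>set T. sorted_wrt (<) r" "x \<notin> set (reading T)" "distinct (reading T)"
  shows "knuth_steps (reading T @ [x]) (reading (tab_ins x T))"
  using assms
proof (induction T arbitrary: x)
  case (Cons r T)
  have r: "sorted_wrt (<) r" "x \<notin> set r" using Cons.prems by (auto simp: reading_def)
  obtain r' b where rb: "row_ins x r = (r', b)" by fastforce
  show ?case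
  proof (cases b)
    case None
    then show ?thesis using rb row_ins_None[OF _ r(2)] by (simp add: reading_def)
  next
    case (Some y)
    have bump: "knuth_steps (r @ [x]) (y # r')" using row_ins_knuth_steps[OF r] rb Some by simp
    have "y \<in> set r" using row_ins_Some[OF _ r(2)] rb Some by force
    then have "y \<notin> set (reading T)" using Cons.prems(3) by (auto simp: reading_def)
    then have "knuth_steps (reading T @ [y]) (reading (tab_ins y T))"
      using Cons.IH Cons.prems by (simp add: reading_def)
    then have "knuth_steps ((reading T @ [y]) @ r') (reading (tab_ins y T) @ r')"
      using knuth_steps_append[of _ _ "[]" r'] by (metis append_Nil)
    moreover have "knuth_steps (reading T @ (r @ [x]) @ []) (reading T @ (y # r') @ [])"
      using knuth_steps_append[OF bump] by blast
    ultimately show ?thesis using rb Some by (simp add: reading_def)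
  qed
qed (simp add: reading_def)

lemma tab_ins_sorted_rows:
  assumes "\<forall>r\<in>set T. sorted_wrt (<) r" "x \<notin> set (reading T)" "distinct (reading T)"
  shows "\<forall>r\<in>set (tab_ins x T). sorted_wrt (<) r"
  using assms
proof (induction T arbitrary: x)
  case (Cons r T)
  have r: "sorted_wrt (<) r" "x \<notin> set r" using Cons.prems by (auto simp: reading_def)
  obtain r' b where rb: "row_ins x r = (r', b)" by fastforce
  have "sorted_wrt (<) r'" using row_ins_sorted[OF r rb] .
  moreover have "\<forall>r\<in>set (tab_ins y T). sorted_wrt (<) r" if "b = Some y" for y
  proof -
    have "y \<in> set r" using row_ins_Some[OF _ r(2)] rb that by force
    then have "y \<notin> set (reading T)" using Cons.prems(3) by (auto simp: reading_def)
    then show ?thesis using Cons.IH Cons.prems by (simp add: reading_def)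
  qed
  ultimately show ?case using rb Cons.prems(1) by (cases b) auto
qed simp

lemma rsk_P_snoc: "rsk_P (w @ [x]) = tab_ins x (rsk_P w)"
  by (simp add: rsk_P_def)

definition row_dominates :: "nat list \<Rightarrow> nat list \<Rightarrow> bool" where
  "row_dominates r s \<longleftrightarrow> length s \<le> length r \<and> (\<forall>c<length s. r!c < s!c)"

fun column_strict :: "nat list list \<Rightarrow> bool" where
  "column_strict [] = True"
| "column_strict [r] = True"
| "column_strict (r # s # T) \<longleftrightarrow> row_dominates r s \<and> column_strict (s # T)"

lemma row_ins_Some_nth:
  assumes "row_ins x r = (r', Some y)" "x \<notin> set r"
  shows "\<exists>j<length r. r!j = y \<and> r' = r[j := x] \<and> (\<forall>c<j. r!c < x) \<and> x < y"
proof -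
  obtain a b where "r = a @ y # b" "r' = a @ x # b" "\<forall>e\<in>set a. e < x" "x < y"
    using row_ins_Some[OF assms] by blast
  then show ?thesis by (intro exI[of _ "length a"]) (auto simp: nth_append)
qed

lemma row_dominates_row_ins:
  assumes r: "row_ins x r = (r', Some y)" "sorted_wrt (<) r" "x \<notin> set r"
    and s: "y \<notin> set s" "row_dominates r s" "row_ins y s = (s', b)"
  shows "row_dominates r' s'"
proof -
  obtain j where j: "j < length r" "r!j = y" "r' = r[j := x]" "\<forall>c<j. r!c < x" "x < y"
    using row_ins_Some_nth[OF r(1,3)] by blast
  have dom: "length s \<le> length r" "\<And>c. c < length s \<Longrightarrow> r!c < s!c"
    using s(2) by (auto simp: row_dominates_def)
  \<comment> \<open>in both cases the new entry \<open>y\<close> of \<open>s'\<close> sits in a column \<open>c \<le> j\<close>, where \<open>r'!c \<le> x\<close>\<close>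
  have below_y: "r'!c < y" if "c \<le> j" for c
  proof (cases "c = j")
    case False
    then have "r'!c = r!c" "r!c < x" using j that by auto
    then show ?thesis using j(5) by simp
  qed (use j in simp)
  show ?thesis
  proof (cases b)
    case None
    then have s': "s' = s @ [y]" "\<forall>e\<in>set s. e < y" using row_ins_None[OF _ s(1)] s(3) by auto
    have "length s \<le> j"
    proof (rule ccontr)
      assume "\<not> length s \<le> j"
      then have "r!j < s!j" "s!j < y" using dom s' by auto
      then show False using j by simp
    qed
    then show ?thesis
      using s' dom j below_y by (auto simp: row_dominates_def nth_append less_Suc_eq)
  next
    case (Some z)
    obtain j' where j': "j' < length s" "s' = s[j' := y]" "\<forall>c<j'. s!c < y"
      using row_ins_Some_nth[OF _ s(1)] s(3) Some by blast
    have "j' \<le> j"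
    proof (rule ccontr)
      assume "\<not> j' \<le> j"
      then have "s!j < y" "r!j < s!j" using j' dom j(1) by auto
      then show False using j by simp
    qed
    moreover have "x < s!j" if "j < length s" using dom(2)[OF that] j by simp
    ultimately show ?thesis
      using j j' dom below_y by (auto simp: row_dominates_def nth_list_update)
  qed
qed

lemma tab_ins_column_strict:
  assumes "\<forall>r\<in>set T. sorted_wrt (<) r" "x \<notin> set (reading T)" "distinct (reading T)"
    and "column_strict T"
  shows "column_strict (tab_ins x T)"
  using assms
proof (induction T arbitrary: x)
  case (Cons r T)
  have r: "sorted_wrt (<) r" "x \<notin> set r" using Cons.prems by (auto simp: reading_def)
  define s where "s = (case T of [] \<Rightarrow> [] | s # _ \<Rightarrow> s)"
  have "row_dominates r s" "column_strict T"
    using Cons.prems(4) by (cases T; simp add: s_def row_dominates_def)+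
  obtain r' b where rb: "row_ins x r = (r', b)" by fastforce
  show ?case
  proof (cases b)
    case None
    then have "r' = r @ [x]" using row_ins_None[OF _ r(2)] rb by simp
    then show ?thesis using rb None Cons.prems(4) by (cases T) (auto simp: row_dominates_def nth_append)
  next
    case (Some y)
    have "y \<in> set r" using row_ins_Some[OF _ r(2)] rb Some by force
    then have y: "y \<notin> set (reading T)" using Cons.prems(3) by (auto simp: reading_def)
    then have "y \<notin> set s" by (cases T) (auto simp: s_def reading_def)
    moreover obtain s' b' where sb: "row_ins y s = (s', b')" by fastforce
    ultimately have "row_dominates r' s'"
      using row_dominates_row_ins[OF _ r] \<open>row_dominates r s\<close> rb Some by simp
    moreover have "column_strict (tab_ins y T)"
      using Cons.IH y Cons.prems \<open>column_strict T\<close> by (simp add: reading_def)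
    moreover obtain rest where "tab_ins y T = s' # rest"
      using sb by (cases T; cases b') (auto simp: s_def)
    ultimately show ?thesis using rb Some by simp
  qed
qed simp

definition tableau :: "nat list list \<Rightarrow> bool" where
  "tableau T \<longleftrightarrow> distinct (reading T) \<and> (\<forall>r\<in>set T. sorted_wrt (<) r) \<and> column_strict T"

lemma tab_ins_tableau:
  assumes "tableau T" "x \<notin> set (reading T)"
  shows "tableau (tab_ins x T)"
proof -
  have T: "distinct (reading T)" "\<forall>r\<in>set T. sorted_wrt (<) r" "column_strict T"
    using assms(1) unfolding tableau_def by auto
  have "mset (reading (tab_ins x T)) = mset (reading T @ [x])"
    using knuth_steps_mset[OF tab_ins_knuth_steps[OF T(2) assms(2) T(1)]] .
  moreover have "distinct (reading T @ [x])" using T(1) assms(2) by simp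
  ultimately have "distinct (reading (tab_ins x T))" using mset_eq_imp_distinct_iff by blast
  then show ?thesis
    using tab_ins_sorted_rows[OF T(2) assms(2) T(1)] tab_ins_column_strict[OF T(2) assms(2) T(1,3)]
    unfolding tableau_def by blast
qed

lemma rsk_P_tableau:
  assumes "distinct w"
  shows "tableau (rsk_P w) \<and> knuth_steps w (reading (rsk_P w))"
  using assms
proof (induction w rule: rev_induct)
  case (snoc x w)
  then have IH: "tableau (rsk_P w)" "knuth_steps w (reading (rsk_P w))" by auto
  have "set (reading (rsk_P w)) = set w" using knuth_steps_mset[OF IH(2)] by (rule mset_eq_setD)
  then have "x \<notin> set (reading (rsk_P w))" using snoc.prems by simp
  moreover have "knuth_steps (w @ [x]) (reading (rsk_P w) @ [x])"
    using knuth_steps_append[OF IH(2), of "[]" "[x]"] by simp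
  moreover have "knuth_steps (reading (rsk_P w) @ [x]) (reading (rsk_P (w @ [x])))"
    using tab_ins_knuth_steps IH(1) \<open>x \<notin> set (reading (rsk_P w))\<close>
    unfolding tableau_def rsk_P_snoc by blast
  ultimately show ?case
    using tab_ins_tableau[OF IH(1)] unfolding rsk_P_snoc by (meson rtranclp_trans)
qed (simp add: rsk_P_def reading_def tableau_def)

lemma reading_split:
  "k < length T \<Longrightarrow> \<exists>X Z. reading T = X @ T!k @ Z"
  by (subst id_take_nth_drop[of k T]) auto

lemma reading_split2:
  assumes "k < k'" "k' < length T"
  shows "\<exists>X Y Z. reading T = X @ T!k' @ Y @ T!k @ Z"
proof -
  obtain Y Z where "reading (take k' T) = Y @ take k' T ! k @ Z"
    using reading_split[of k "take k' T"] assms by auto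
  then have "reading T = reading (drop (Suc k') T) @ T!k' @ Y @ T!k @ Z"
    using assms by (subst id_take_nth_drop[OF assms(2)]) simp
  then show ?thesis by blast
qed

lemma distinct_reading_row:
  "distinct (reading T) \<Longrightarrow> k < length T \<Longrightarrow> distinct (T!k)"
  using reading_split by fastforce

lemma distinct_reading_rows_disjoint:
  assumes "distinct (reading T)" "k < length T" "k' < length T" "k \<noteq> k'"
  shows "set (T!k) \<inter> set (T!k') = {}"
proof -
  have "set (T!a) \<inter> set (T!b) = {}" if "a < b" "b < length T" for a b
    using reading_split2[OF that] assms(1) by auto
  then show ?thesis using assms(2-4) by (metis Int_commute linorder_neqE_nat)
qed

lemma sorted_wrt_filter_nth:
  "sorted_wrt R (filter P w) \<Longrightarrow> i < j \<Longrightarrow> j < length w \<Longrightarrow> P (w!i) \<Longrightarrow> P (w!j) \<Longrightarrow> R (w!i) (w!j)"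
proof (induction w arbitrary: i j)
  case (Cons a w)
  obtain j' where j': "j = Suc j'" using Cons.prems(2) by (cases j) auto
  show ?case
  proof (cases i)
    case 0
    then have "w!j' \<in> set (filter P w)" using Cons.prems j' by auto
    then show ?thesis using Cons.prems 0 j' by simp
  next
    case (Suc i')
    have "sorted_wrt R (filter P w)" using Cons.prems(1) by (auto split: if_splits)
    then show ?thesis using Cons.IH[of i' j'] Cons.prems Suc j' by simp
  qed
qed simp

lemma increasing_in_infix:
  assumes "distinct (X @ r @ Z)" "sorted_wrt (<) r"
  shows "increasing_in (X @ r @ Z) (set r)"
proof -
  have "filter (\<lambda>v. v \<in> set r) X = []" "filter (\<lambda>v. v \<in> set r) Z = []"
    using assms(1) by (auto simp: filter_empty_conv)
  then have "filter (\<lambda>v. v \<in> set r) (X @ r @ Z) = r" by simp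
  then show ?thesis
    using assms(2) sorted_wrt_filter_nth[of "(<)" "\<lambda>v. v \<in> set r" "X @ r @ Z"]
    unfolding increasing_in_def by auto
qed

lemma tableau_rows_family:
  assumes "tableau T"
  shows "increasing_family (reading T) j (\<lambda>k. if k < length T then set (T!k) else {})"
  unfolding increasing_family_def
proof (intro conjI allI impI)
  fix k assume "k < j"
  show "increasing_in (reading T) (if k < length T then set (T!k) else {})"
  proof (cases "k < length T")
    case True
    then obtain X Z where "reading T = X @ T!k @ Z" using reading_split by blast
    then show ?thesis
      using True assms increasing_in_infix[of X "T!k" Z] unfolding tableau_def by auto
  qed (simp add: increasing_in_def)
next
  fix k k' assume "k < j" "k' < j" "k \<noteq> k'"
  then show "(if k < length T then set (T!k) else {}) \<inter> (if k' < length T then set (T!k') else {}) = {}"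
    using distinct_reading_rows_disjoint assms unfolding tableau_def by auto
qed

lemma sum_shape_le_greene:
  assumes "tableau T"
  shows "(\<Sum>k<j. part (map length T) k) \<le> greene (reading T) j"
proof -
  let ?F = "\<lambda>k. if k < length T then set (T!k) else {}"
  have "card (\<Union>k<j. ?F k) = (\<Sum>k<j. card (?F k))"
    using distinct_reading_rows_disjoint assms unfolding tableau_def
    by (intro card_UN_disjoint) auto
  also have "\<dots> = (\<Sum>k<j. part (map length T) k)"
    using distinct_reading_row assms unfolding tableau_def
    by (intro sum.cong) (auto simp: part_def distinct_card)
  finally show ?thesis using greene_ge[OF tableau_rows_family[OF assms, of j]] by simp
qed

lemma column_strict_adjacent:
  "column_strict T \<Longrightarrow> Suc k < length T \<Longrightarrow> row_dominates (T!k) (T!Suc k)"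
proof (induction T arbitrary: k rule: column_strict.induct)
  case (3 r s T)
  then show ?case by (cases k) auto
qed auto

lemma column_strict_nth:
  assumes "column_strict T" "k < k'" "k' < length T" "c < length (T!k')"
  shows "c < length (T!k) \<and> T!k!c < T!k'!c"
  using assms(2-4)
proof (induction k' rule: less_induct)
  case (less k')
  then obtain m where m: "k' = Suc m" by (cases k') auto
  then have "c < length (T!m)" "T!m!c < T!k'!c"
    using column_strict_adjacent[OF assms(1), of m] less.prems by (auto simp: row_dominates_def)
  then show ?case using less.IH[of m] less.prems m by (cases "k = m") auto
qed

lemma column_not_increasing:
  assumes "column_strict T" "increasing_in (reading T) S" "k < k'" "k' < length T" "c < length (T!k')"
  shows "\<not> (T!k!c \<in> S \<and> T!k'!c \<in> S)"
proof
  assume in_S: "T!k!c \<in> S \<and> T!k'!c \<in> S"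
  have col: "c < length (T!k)" "T!k!c < T!k'!c" using column_strict_nth assms(1,3-5) by blast+
  obtain X Y Z where XYZ: "reading T = X @ T!k' @ Y @ T!k @ Z" using reading_split2 assms(3,4) by blast
  define i i' where "i = length X + c" and "i' = length X + length (T!k') + length Y + c"
  have "reading T ! i = T!k'!c" "reading T ! i' = T!k!c" "i < i'" "i' < length (reading T)"
    using XYZ col assms(5) by (auto simp: i_def i'_def nth_append)
  then have "T!k'!c < T!k!c" using assms(2) in_S unfolding increasing_in_def by metis
  then show False using col by simp
qed

lemma down_closed_eq_lessThan:
  fixes H :: "nat set"
  assumes "\<And>k k'. k' \<in> H \<Longrightarrow> k < k' \<Longrightarrow> k \<in> H" "b \<notin> H"
  shows "\<exists>m. H = {..<m}"
proof -
  define m where "m = (LEAST k. k \<notin> H)"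
  have "m \<notin> H" unfolding m_def by (rule LeastI[of _ b]) (use assms(2) in simp)
  then have "k \<notin> H" if "m \<le> k" for k
    using assms(1)[of k m] that by (cases "m = k") auto
  moreover have "k \<in> H" if "k < m" for k using that not_less_Least unfolding m_def by blast
  ultimately have "k \<in> H \<longleftrightarrow> k < m" for k using not_le by blast
  then show ?thesis by blast
qed

lemma card_column_le:
  assumes T: "tableau T" and F: "increasing_family (reading T) j F"
  shows "card {k. k < length T \<and> c < length (T!k) \<and> T!k!c \<in> (\<Union>i<j. F i)}
    \<le> card {k. k < j \<and> k < length T \<and> c < length (T!k)}"
proof -
  let ?col = "{k. k < length T \<and> c < length (T!k)}"
  let ?A = "{k. k < length T \<and> c < length (T!k) \<and> T!k!c \<in> (\<Union>i<j. F i)}"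
  have cs: "column_strict T" using T unfolding tableau_def by simp
  have "k \<in> ?col" if "k' \<in> ?col" "k < k'" for k k'
    using column_strict_nth[OF cs that(2)] that by auto
  then obtain m where m: "?col = {..<m}" using down_closed_eq_lessThan[of ?col "length T"] by auto
  have "?A \<subseteq> {..<m}" using m by blast
  then have "card ?A \<le> m" using card_mono[of "{..<m}" ?A] by simp
  moreover have "card ?A \<le> j"
  proof -
    define g where "g k = (SOME i. i < j \<and> T!k!c \<in> F i)" for k
    have g: "g k < j \<and> T!k!c \<in> F (g k)" if "k \<in> ?A" for k
      using that someI_ex[of "\<lambda>i. i < j \<and> T!k!c \<in> F i"] unfolding g_def by blast
    have "inj_on g ?A"
    proof (rule inj_onI, rule ccontr)
      fix k k' assume kk': "k \<in> ?A" "k' \<in> ?A" "g k = g k'" "k \<noteq> k'"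
      have S: "increasing_in (reading T) (F (g k))"
        using F g[OF kk'(1)] unfolding increasing_family_def by blast
      have "T!k!c \<in> F (g k)" "T!k'!c \<in> F (g k)" using g[OF kk'(1)] g[OF kk'(2)] kk'(3) by auto
      moreover have "k < length T" "c < length (T!k)" "k' < length T" "c < length (T!k')"
        using kk'(1,2) by auto
      moreover consider "k < k'" | "k' < k" using kk'(4) by linarith
      ultimately show False using column_not_increasing[OF cs S] by cases blast+
    qed
    moreover have "g ` ?A \<subseteq> {..<j}" using g by blast
    ultimately show ?thesis using card_inj_on_le[of g ?A "{..<j}"] by simp
  qed
  moreover have "card {k. k < j \<and> k < length T \<and> c < length (T!k)} = min j m"
  proof -
    have "{k. k < j \<and> k < length T \<and> c < length (T!k)} = {..<j} \<inter> ?col" by blast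
    also have "\<dots> = {..<min j m}" unfolding m by auto
    finally show ?thesis by simp
  qed
  ultimately show ?thesis by linarith
qed

lemma card_eq_sum_column_card:
  fixes A :: "(nat \<times> nat) set"
  assumes "finite A" "snd ` A \<subseteq> {..<L}"
  shows "card A = (\<Sum>c<L. card {k. (k, c) \<in> A})"
proof -
  have "finite {k. (k, c) \<in> A}" for c
    using finite_imageI[OF assms(1), of fst] by (rule finite_subset[rotated]) force
  then have "card (Sigma {..<L} (\<lambda>c. {k. (k, c) \<in> A})) = (\<Sum>c<L. card {k. (k, c) \<in> A})"
    by (intro card_SigmaI) auto
  moreover have "prod.swap ` A = Sigma {..<L} (\<lambda>c. {k. (k, c) \<in> A})" using assms(2) by force
  ultimately show ?thesis using card_image[of prod.swap A] by simp
qed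

lemma card_first_rows:
  "card {(k, c). k < j \<and> k < length T \<and> c < length (T!k)} = (\<Sum>k<j. part (map length T) k)"
proof -
  have "{(k, c). k < j \<and> k < length T \<and> c < length (T!k)}
      = Sigma {k\<in>{..<j}. k < length T} (\<lambda>k. {..<length (T!k)})" by auto
  then have "card {(k, c). k < j \<and> k < length T \<and> c < length (T!k)}
      = (\<Sum>k\<in>{k\<in>{..<j}. k < length T}. length (T!k))" by (simp add: card_SigmaI)
  also have "\<dots> = (\<Sum>k<j. if k < length T then length (T!k) else 0)"
    by (rule sum.inter_filter) simp
  also have "\<dots> = (\<Sum>k<j. part (map length T) k)" by (intro sum.cong) (auto simp: part_def)
  finally show ?thesis .
qed

lemma card_eq_card_cells:
  assumes dist: "distinct (reading T)" and U: "U \<subseteq> set (reading T)"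
  shows "card U = card {(k, c). k < length T \<and> c < length (T!k) \<and> T!k!c \<in> U}"
proof -
  let ?val = "\<lambda>(k, c). T!k!c"
  define A where "A = {(k, c). k < length T \<and> c < length (T!k) \<and> T!k!c \<in> U}"
  have "inj_on ?val A"
  proof (rule inj_onI, clarify)
    fix k c k' c' assume kc: "(k, c) \<in> A" "(k', c') \<in> A" "T!k!c = T!k'!c'"
    have "T!k!c \<in> set (T!k)" "T!k'!c' \<in> set (T!k')" using kc(1,2) unfolding A_def by auto
    then have "T!k!c \<in> set (T!k) \<inter> set (T!k')" using kc(3) by simp
    then have "k = k'" using distinct_reading_rows_disjoint[OF dist, of k k'] kc(1,2)
      unfolding A_def by blast
    then show "k = k' \<and> c = c'"
      using distinct_reading_row[OF dist] kc unfolding A_def by (simp add: nth_eq_iff_index_eq)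
  qed
  moreover have "?val ` A = U"
  proof
    show "U \<subseteq> ?val ` A"
    proof
      fix v assume "v \<in> U"
      moreover have "v \<in> set (reading T)" using U \<open>v \<in> U\<close> by blast
      then obtain k c where "k < length T" "c < length (T!k)" "v = T!k!c"
        unfolding reading_def by (auto simp: in_set_conv_nth)
      ultimately have "(k, c) \<in> A" "v = ?val (k, c)" unfolding A_def by simp_all
      then show "v \<in> ?val ` A" by blast
    qed
  qed (auto simp: A_def)
  ultimately have "card U = card A" using card_image by metis
  then show ?thesis unfolding A_def .
qed

lemma card_Union_le_sum_shape:
  assumes T: "tableau T" and F: "increasing_family (reading T) j F"
  shows "card (\<Union>i<j. F i) \<le> (\<Sum>k<j. part (map length T) k)"
proof -
  let ?U = "\<Union>i<j. F i"
  define L where "L = length (reading T)"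
  define A where "A = {(k, c). k < length T \<and> c < length (T!k) \<and> T!k!c \<in> ?U}"
  define Q where "Q = {(k, c). k < j \<and> k < length T \<and> c < length (T!k)}"
  have "length (T!k) \<le> L" if "k < length T" for k
    using reading_split[OF that] unfolding L_def by fastforce
  then have "A \<subseteq> {..<length T} \<times> {..<L}" "Q \<subseteq> {..<length T} \<times> {..<L}"
    unfolding A_def Q_def by fastforce+
  then have fin: "finite A" "finite Q" and range: "snd ` A \<subseteq> {..<L}" "snd ` Q \<subseteq> {..<L}"
    by (auto intro: finite_subset)
  have "card ?U = card A"
    using card_eq_card_cells T increasing_family_Union_subset[OF F] unfolding A_def tableau_def by blast
  also have "\<dots> = (\<Sum>c<L. card {k. (k, c) \<in> A})" by (rule card_eq_sum_column_card[OF fin(1) range(1)])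
  also have "\<dots> \<le> (\<Sum>c<L. card {k. (k, c) \<in> Q})"
    using card_column_le[OF T F] unfolding A_def Q_def by (intro sum_mono) simp
  also have "\<dots> = card Q" by (rule card_eq_sum_column_card[OF fin(2) range(2), symmetric])
  also have "\<dots> = (\<Sum>k<j. part (map length T) k)" unfolding Q_def by (rule card_first_rows)
  finally show ?thesis .
qed

lemma greene_tableau:
  assumes "tableau T"
  shows "greene (reading T) j = (\<Sum>k<j. part (map length T) k)"
  using greene_attained[of "reading T" j] card_Union_le_sum_shape[OF assms]
    sum_shape_le_greene[OF assms, of j] by (metis le_antisym)

lemma sum_rsk_shape_eq_greene:
  assumes "distinct w"
  shows "(\<Sum>k<j. part (map length (rsk_P w)) k) = greene w j"
  using rsk_P_tableau[OF assms] greene_tableau knuth_steps_greene assms by metis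

lemma increasing_in_map_transpose:
  assumes "increasing_in w S" "\<not> (k \<in> S \<and> Suc k \<in> S)"
  shows "increasing_in (map (transpose k (Suc k)) w) (transpose k (Suc k) ` S)"
  unfolding increasing_in_def
proof (intro conjI allI impI)
  let ?t = "transpose k (Suc k)"
  show "?t ` S \<subseteq> set (map ?t w)" using assms(1) unfolding increasing_in_def by auto
  fix i i' assume ii': "i < i'" "i' < length (map ?t w)" "map ?t w ! i \<in> ?t ` S" "map ?t w ! i' \<in> ?t ` S"
  then have "w!i \<in> S" "w!i' \<in> S" by (auto simp: inj_image_mem_iff[OF inj_transpose])
  then have "w!i < w!i'" "\<not> (w!i = k \<and> w!i' = Suc k)"
    using assms ii' unfolding increasing_in_def by auto
  then show "map ?t w ! i < map ?t w ! i'" using ii' by (auto simp: transpose_def)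
qed

lemma increasing_family_map_transpose:
  assumes "increasing_family w j F" "\<forall>i<j. \<not> (k \<in> F i \<and> Suc k \<in> F i)"
  shows "increasing_family (map (transpose k (Suc k)) w) j (\<lambda>i. transpose k (Suc k) ` F i)"
  using assms increasing_in_map_transpose unfolding increasing_family_def
  by (simp add: image_Int[symmetric] inj_transpose)

lemma greene_le_map_transpose:
  assumes "\<And>S. increasing_in w S \<Longrightarrow> \<not> (k \<in> S \<and> Suc k \<in> S)"
  shows "greene w j \<le> greene (map (transpose k (Suc k)) w) j"
proof (rule greene_le_by_transfer)
  fix F assume F: "increasing_family w j F"
  then have "\<forall>i<j. \<not> (k \<in> F i \<and> Suc k \<in> F i)"
    using assms unfolding increasing_family_def by blast
  then have "increasing_family (map (transpose k (Suc k)) w) j (\<lambda>i. transpose k (Suc k) ` F i)"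
    by (rule increasing_family_map_transpose[OF F])
  moreover have "card (transpose k (Suc k) ` (\<Union>i<j. F i)) = card (\<Union>i<j. F i)"
    by (intro card_image inj_on_subset[OF inj_transpose]) simp
  ultimately show "\<exists>F'. increasing_family (map (transpose k (Suc k)) w) j F' \<and>
      card (\<Union>i<j. F i) \<le> card (\<Union>i<j. F' i)"
    by (intro exI[of _ "\<lambda>i. transpose k (Suc k) ` F i"]) (simp add: image_UN)
qed

lemma greene_le_map_transpose_Suc:
  "greene w j \<le> greene (map (transpose k (Suc k)) w) j + 1"
proof (rule greene_le_add_by_transfer)
  fix F assume F: "increasing_family w j F"
  define F' where "F' i = F i - {k}" for i
  have "increasing_family w j F'"
    using F unfolding F'_def increasing_family_def by (auto intro: increasing_in_subset)
  then have "increasing_family (map (transpose k (Suc k)) w) j (\<lambda>i. transpose k (Suc k) ` F' i)"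
    by (rule increasing_family_map_transpose) (simp add: F'_def)
  moreover have "card (transpose k (Suc k) ` (\<Union>i<j. F' i)) = card ((\<Union>i<j. F i) - {k})"
    by (subst card_image) (auto intro: inj_on_subset[OF inj_transpose] simp: F'_def)
  moreover have "card (\<Union>i<j. F i) \<le> card ((\<Union>i<j. F i) - {k}) + 1"
    using finite_subset[OF increasing_family_Union_subset[OF F]]
    by (cases "k \<in> (\<Union>i<j. F i)") (simp_all add: card_Suc_Diff1)
  ultimately show "\<exists>F'. increasing_family (map (transpose k (Suc k)) w) j F' \<and>
      card (\<Union>i<j. F i) \<le> card (\<Union>i<j. F' i) + 1"
    by (intro exI[of _ "\<lambda>i. transpose k (Suc k) ` F' i"]) (simp add: image_UN)
qed

lemma greene_map_transpose_interlace:
  assumes "i < i'" "i' < length w" "w!i = Suc k" "w!i' = k"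
  shows "greene w j \<le> greene (map (transpose k (Suc k)) w) j"
    and "greene (map (transpose k (Suc k)) w) j \<le> greene w j + 1"
proof -
  show "greene w j \<le> greene (map (transpose k (Suc k)) w) j"
  proof (rule greene_le_map_transpose, rule notI)
    fix S assume S: "increasing_in w S" "k \<in> S \<and> Suc k \<in> S"
    then have "w!i \<in> S" "w!i' \<in> S" using assms(3,4) by auto
    then have "w!i < w!i'" using S(1) assms(1,2) unfolding increasing_in_def by blast
    then show False using assms by simp
  qed
  have "map (transpose k (Suc k)) (map (transpose k (Suc k)) w) = w" by (simp add: map_idI)
  then show "greene (map (transpose k (Suc k)) w) j \<le> greene w j + 1"
    using greene_le_map_transpose_Suc[of "map (transpose k (Suc k)) w" j k] by simp
qed

text \<open>
  Set \<open>e j = (\<Sum>i<j. f i) - (\<Sum>i<j. g i) \<in> {0, 1}\<close>. Every index with \<open>f i \<noteq> g i\<close> toggles \<open>e\<close>,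
  and the parts below a toggle must make room for all toggles after it, so the tail sums of
  \<open>f + g\<close> grow quadratically in the number of toggles.
\<close>

lemma interlacing_sum_abs_diff_sq_le:
  fixes f g :: "nat \<Rightarrow> nat" and N n :: nat
  assumes mf: "\<And>i. f (Suc i) \<le> f i" and mg: "\<And>i. g (Suc i) \<le> g i"
    and e1: "\<And>j. (\<Sum>i<j. g i) \<le> (\<Sum>i<j. f i)" and e2: "\<And>j. (\<Sum>i<j. f i) \<le> (\<Sum>i<j. g i) + 1"
    and sf: "(\<Sum>i<N. f i) = n" and sg: "(\<Sum>i<N. g i) = n"
  shows "(\<Sum>i<N. \<bar>int (f i) - int (g i)\<bar>)^2 \<le> 2 * int n"
proof -
  define e where "e j = int (\<Sum>i<j. f i) - int (\<Sum>i<j. g i)" for j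
  have e01: "\<And>j. e j = 0 \<or> e j = 1" using e1 e2 unfolding e_def by (smt (verit) of_nat_add of_nat_le_iff of_nat_1)
  have ed: "\<And>i. int (f i) - int (g i) = e (Suc i) - e i" unfolding e_def by simp
  define V where "V i = (\<Sum>k\<in>{i..<N}. \<bar>int (f k) - int (g k)\<bar>)" for i
  define X where "X i = (\<Sum>k\<in>{i..<N}. int (f k) + int (g k))" for i
  have main: "int (f i) + e i \<ge> V i \<and> int (g i) + 1 - e i \<ge> V i \<and> X i \<ge> (V i)^2" if "i \<le> N" for i
    using that
  proof (induction i rule: inc_induct)
    case base then show ?case using e01[of N] by (auto simp: V_def X_def)
  next
    case (step m)
    have V: "V m = \<bar>int (f m) - int (g m)\<bar> + V (Suc m)" unfolding V_def using step(2) by (simp add: sum.atLeast_Suc_lessThan)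
    have X: "X m = int (f m) + int (g m) + X (Suc m)" unfolding X_def using step(2) by (simp add: sum.atLeast_Suc_lessThan)
    have IH: "int (f (Suc m)) + e (Suc m) \<ge> V (Suc m)" "int (g (Suc m)) + 1 - e (Suc m) \<ge> V (Suc m)"
      "X (Suc m) \<ge> (V (Suc m))^2" using step(3) by auto
    have m1: "int (f (Suc m)) \<le> int (f m)" "int (g (Suc m)) \<le> int (g m)" using mf mg by auto
    have d: "int (f m) - int (g m) = e (Suc m) - e m" by (rule ed)
    have sq: "(V (Suc m) + 1)^2 = (V (Suc m))^2 + 2 * V (Suc m) + 1" by algebra
    show ?case
    proof (cases "e m = e (Suc m)")
      case True
      then show ?thesis using V X IH m1 d by auto
    next
      case False
      then have "V m = V (Suc m) + 1" "e m = 0 \<and> e (Suc m) = 1 \<or> e m = 1 \<and> e (Suc m) = 0"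
        using V d e01[of m] e01[of "Suc m"] by auto
      then show ?thesis using X IH m1 d sq by auto
    qed
  qed
  have "X 0 \<ge> (V 0)^2" using main[of 0] by simp
  moreover have "X 0 = 2 * int n" unfolding X_def using sf sg
    by (simp add: sum.distrib atLeast0LessThan flip: of_nat_sum)
  moreover have "V 0 = (\<Sum>i<N. \<bar>int (f i) - int (g i)\<bar>)" unfolding V_def by (simp add: atLeast0LessThan)
  ultimately show ?thesis by simp
qed

lemma interlacing_sum_abs_diff_le:
  fixes f g :: "nat \<Rightarrow> nat"
  assumes "\<And>i. f (Suc i) \<le> f i" "\<And>i. g (Suc i) \<le> g i"
    and "\<And>j. (\<Sum>i<j. g i) \<le> (\<Sum>i<j. f i)" "\<And>j. (\<Sum>i<j. f i) \<le> (\<Sum>i<j. g i) + 1"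
    and "(\<Sum>i<N. f i) = n" "(\<Sum>i<N. g i) = n" "n \<le> N"
  shows "(\<Sum>i<n. \<bar>real (f i) - real (g i)\<bar>) / 2 \<le> sqrt (real n / 2)"
proof -
  have C: "(\<Sum>i<N. \<bar>int (f i) - int (g i)\<bar>)^2 \<le> 2 * int n"
    by (rule interlacing_sum_abs_diff_sq_le[OF assms(1-6)])
  define D where "D = (\<Sum>i<n. \<bar>real (f i) - real (g i)\<bar>)"
  define V where "V = (\<Sum>i<N. \<bar>real (f i) - real (g i)\<bar>)"
  define Vi where "Vi = (\<Sum>i<N. \<bar>int (f i) - int (g i)\<bar>)"
  have VV: "V = real_of_int Vi" unfolding V_def Vi_def by (simp add: of_int_sum)
  have "real_of_int (Vi^2) \<le> real_of_int (2 * int n)" using C unfolding Vi_def by (simp only: of_int_le_iff)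
  then have V2: "V^2 \<le> 2 * real n" unfolding VV by simp
  have D0: "0 \<le> D" unfolding D_def by (rule sum_nonneg) simp
  have "D \<le> V" unfolding D_def V_def by (rule sum_mono2) (use assms(7) in \<open>simp_all\<close>)
  then have "D^2 \<le> V^2" using D0 by (simp add: power_mono)
  then have "(D/2)^2 \<le> real n / 2" using V2 by (simp add: power_divide)
  then show ?thesis using real_le_rsqrt unfolding D_def by blast
qed

lemma part_Suc_le:
  assumes "tableau T"
  shows "part (map length T) (Suc i) \<le> part (map length T) i"
proof (cases "Suc i < length T")
  case True
  then show ?thesis
    using column_strict_adjacent[of T i] assms unfolding tableau_def by (simp add: part_def row_dominates_def)
qed (simp add: part_def)

lemma sum_part_eq_length_reading:
  assumes "length T \<le> M"
  shows "(\<Sum>k<M. part (map length T) k) = length (reading T)"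
proof -
  have "(\<Sum>k<M. part (map length T) k) = (\<Sum>k<M. if k < length T then length (T!k) else 0)"
    by (intro sum.cong) (auto simp: part_def)
  also have "\<dots> = (\<Sum>k\<in>{k\<in>{..<M}. k < length T}. length (T!k))"
    by (rule sum.inter_filter[symmetric]) simp
  also have "{k\<in>{..<M}. k < length T} = {0..<length T}" using assms by auto
  also have "(\<Sum>k\<in>{0..<length T}. length (T!k)) = sum_list (map length T)"
    by (simp add: sum_list_sum_nth)
  also have "\<dots> = length (reading T)" by (simp add: reading_def length_concat rev_map[symmetric])
  finally show ?thesis .
qed

lemma Delta_sym: "Delta n a b = Delta n b a"
  unfolding Delta_def by (simp add: abs_minus_commute)

lemma Delta_triangle: "Delta n a c \<le> Delta n a b + Delta n b c"
proof -
  have "(\<Sum>i<n. \<bar>real (part a i) - real (part c i)\<bar>) \<le>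
        (\<Sum>i<n. \<bar>real (part a i) - real (part b i)\<bar> + \<bar>real (part b i) - real (part c i)\<bar>)"
    by (rule sum_mono) linarith
  then show ?thesis unfolding Delta_def by (simp add: sum.distrib)
qed

lemma Delta_rsk_shape_interlacing:
  assumes "distinct w" "length w = n"
    and "distinct w'" "length w' = n"
    and "\<And>j. greene w j \<le> greene w' j" "\<And>j. greene w' j \<le> greene w j + 1"
  shows "Delta n (map length (rsk_P w')) (map length (rsk_P w)) \<le> sqrt (real n / 2)"
proof -
  define f g where "f = part (map length (rsk_P w'))" and "g = part (map length (rsk_P w))"
  define N where "N = n + length (rsk_P w) + length (rsk_P w')"
  have tab: "tableau (rsk_P w)" "tableau (rsk_P w')" using rsk_P_tableau assms by blast+
  have "length (reading (rsk_P v)) = length v" if "distinct v" for v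
    using knuth_steps_mset rsk_P_tableau[OF that] by (metis size_mset)
  then have "(\<Sum>i<N. f i) = n" "(\<Sum>i<N. g i) = n"
    using assms sum_part_eq_length_reading unfolding f_def g_def N_def by auto
  moreover have "(\<Sum>i<j. g i) \<le> (\<Sum>i<j. f i)" "(\<Sum>i<j. f i) \<le> (\<Sum>i<j. g i) + 1" for j
    using assms sum_rsk_shape_eq_greene unfolding f_def g_def by auto
  ultimately have "(\<Sum>i<n. \<bar>real (f i) - real (g i)\<bar>) / 2 \<le> sqrt (real n / 2)"
    using part_Suc_le[OF tab(1)] part_Suc_le[OF tab(2)] unfolding f_def g_def N_def
    by (intro interlacing_sum_abs_diff_le) auto
  then show ?thesis unfolding Delta_def f_def g_def .
qed

lemma one_line_permutes:
  assumes "p permutes {1..n}"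
  shows "distinct (one_line n p)" "set (one_line n p) = {1..n}" "length (one_line n p) = n"
proof -
  have "set (one_line n p) = p ` {1..n}" unfolding one_line_def by auto
  then show "set (one_line n p) = {1..n}" using permutes_image[OF assms] by simp
  show "distinct (one_line n p)"
    using permutes_inj[OF assms] unfolding one_line_def by (simp add: distinct_map inj_on_subset)
  show "length (one_line n p) = n" unfolding one_line_def by simp
qed

lemma Delta_rsk_shape_transpose:
  assumes p: "p permutes {1..n}" and k: "1 \<le> k" "k \<le> n - 1"
  shows "Delta n (rsk_shape n p) (rsk_shape n (transpose k (Suc k) \<circ> p)) \<le> sqrt (real n / 2)"
proof -
  let ?t = "transpose k (Suc k)"
  define w where "w = one_line n p"
  have w: "distinct w" "set w = {1..n}" "length w = n" using one_line_permutes[OF p] unfolding w_def by auto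
  have w': "distinct (map ?t w)" "length (map ?t w) = n" "map ?t (map ?t w) = w"
    using w(1,3) by (auto simp: distinct_map inj_on_subset[OF inj_transpose] map_idI)
  have shapes: "rsk_shape n p = map length (rsk_P w)"
    "rsk_shape n (?t \<circ> p) = map length (rsk_P (map ?t w))"
    unfolding rsk_shape_def w_def one_line_def by simp_all
  have "k \<in> set w" "Suc k \<in> set w" using w(2) k by auto
  then obtain i i' where i: "i < n" "w!i = k" and i': "i' < n" "w!i' = Suc k"
    using w(3) by (metis in_set_conv_nth)
  have "i \<noteq> i'" using i i' by auto
  then consider "i' < i" | "i < i'" by linarith
  then show ?thesis
  proof cases
    case 1
    then have "Delta n (map length (rsk_P (map ?t w))) (map length (rsk_P w)) \<le> sqrt (real n / 2)"
      using greene_map_transpose_interlace[OF 1] i i' w w'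
      by (intro Delta_rsk_shape_interlacing) auto
    then show ?thesis unfolding shapes by (simp add: Delta_sym)
  next
    case 2
    then have "map ?t w ! i = Suc k" "map ?t w ! i' = k" using i i' w(3) by auto
    then have "Delta n (map length (rsk_P w)) (map length (rsk_P (map ?t w))) \<le> sqrt (real n / 2)"
      using greene_map_transpose_interlace[OF 2, of "map ?t w" k] i i' w w'
      by (intro Delta_rsk_shape_interlacing) auto
    then show ?thesis unfolding shapes .
  qed
qed

abbreviation adj_steps :: "(nat \<Rightarrow> nat) \<Rightarrow> nat list \<Rightarrow> nat \<Rightarrow> nat" where
  "adj_steps p ks \<equiv> foldl (\<lambda>f k. transpose k (Suc k) \<circ> f) p ks"

lemma Delta_rsk_shape_adj_steps:
  assumes "p permutes {1..n}" "\<forall>k\<in>set ks. 1 \<le> k \<and> k \<le> n - 1"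
  shows "Delta n (rsk_shape n p) (rsk_shape n (adj_steps p ks)) \<le> real (length ks) * sqrt (real n / 2)"
  using assms
proof (induction ks arbitrary: p)
  case Nil
  then show ?case by (simp add: Delta_def)
next
  case (Cons k ks)
  let ?p = "transpose k (Suc k) \<circ> p"
  have k: "1 \<le> k" "k \<le> n - 1" using Cons.prems(2) by auto
  then have "?p permutes {1..n}"
    by (intro permutes_compose[OF Cons.prems(1)] permutes_swap_id) auto
  moreover have "\<forall>k\<in>set ks. 1 \<le> k \<and> k \<le> n - 1" using Cons.prems(2) by simp
  ultimately have "Delta n (rsk_shape n ?p) (rsk_shape n (adj_steps ?p ks)) \<le> real (length ks) * sqrt (real n / 2)"
    by (rule Cons.IH)
  moreover have "Delta n (rsk_shape n p) (rsk_shape n ?p) \<le> sqrt (real n / 2)"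
    by (rule Delta_rsk_shape_transpose[OF Cons.prems(1) k])
  ultimately have "Delta n (rsk_shape n p) (rsk_shape n ?p) + Delta n (rsk_shape n ?p) (rsk_shape n (adj_steps ?p ks))
      \<le> real (length (k # ks)) * sqrt (real n / 2)"
    by (simp add: algebra_simps)
  then show ?case
    unfolding foldl_Cons using Delta_triangle[of n "rsk_shape n p" "rsk_shape n (adj_steps ?p ks)" "rsk_shape n ?p"]
    by linarith
qed

lemma adj_steps_comp: "adj_steps (h \<circ> p) ks = adj_steps h ks \<circ> p"
proof (induction ks arbitrary: h)
  case (Cons k ks)
  then show ?case by (simp only: foldl_Cons comp_assoc[symmetric])
qed simp

lemma transpose_eq_adj_steps:
  assumes "1 \<le> a" "a \<le> b" "b \<le> n"
  shows "\<exists>ks. (\<forall>k\<in>set ks. 1 \<le> k \<and> k \<le> n - 1) \<and> adj_steps id ks = transpose a b"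
  using assms
proof (induction b)
  case (Suc b)
  consider "a = Suc b" | "a = b" | "a < b" using Suc.prems(2) by linarith
  then show ?case
  proof cases
    case 1
    then show ?thesis by (intro exI[of _ "[]"]) simp
  next
    case 2
    then show ?thesis using Suc.prems by (intro exI[of _ "[b]"]) simp
  next
    case 3
    then obtain ks where ks: "\<forall>k\<in>set ks. 1 \<le> k \<and> k \<le> n - 1" "adj_steps id ks = transpose a b"
      using Suc.IH[OF Suc.prems(1)] Suc.prems(3) by (meson Suc_leD less_imp_le)
    have "adj_steps (transpose b (Suc b)) ks = adj_steps id ks \<circ> transpose b (Suc b)"
      using adj_steps_comp[of id "transpose b (Suc b)" ks] unfolding id_comp .
    then have "adj_steps id ([b] @ ks @ [b]) = transpose b (Suc b) \<circ> (adj_steps id ks \<circ> transpose b (Suc b))"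
      unfolding foldl_append foldl_Cons foldl_Nil id_comp[of "transpose b (Suc b)", unfolded id_def] by simp
    also have "\<dots> = transpose a (Suc b)"
      using 3 unfolding ks(2) by (auto simp: fun_eq_iff transpose_def)
    finally show ?thesis
    proof (intro exI[of _ "[b] @ ks @ [b]"] conjI)
      show "\<forall>k\<in>set ([b] @ ks @ [b]). 1 \<le> k \<and> k \<le> n - 1" using ks(1) Suc.prems 3 by auto
    qed
  qed
qed simp

lemma permutes_eq_adj_steps:
  assumes "s permutes {1..n}"
  shows "\<exists>ks. (\<forall>k\<in>set ks. 1 \<le> k \<and> k \<le> n - 1) \<and> adj_steps id ks = s"
  using assms finite_atLeastAtMost
proof (induction rule: permutes_induct)
  case id
  then show ?case by (intro exI[of _ "[]"]) simp
next
  case (swap a b s)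
  obtain ks1 where ks1: "\<forall>k\<in>set ks1. 1 \<le> k \<and> k \<le> n - 1" "adj_steps id ks1 = s"
    using swap by blast
  have "\<exists>ks. (\<forall>k\<in>set ks. 1 \<le> k \<and> k \<le> n - 1) \<and> adj_steps id ks = transpose a b"
  proof (cases "a \<le> b")
    case True
    then show ?thesis using transpose_eq_adj_steps swap(1,2) by simp
  next
    case False
    then show ?thesis
      using transpose_eq_adj_steps[of b a n] swap(1,2) by (simp add: transpose_commute)
  qed
  then obtain ks2 where ks2: "\<forall>k\<in>set ks2. 1 \<le> k \<and> k \<le> n - 1" "adj_steps id ks2 = transpose a b"
    by blast
  have "adj_steps id (ks1 @ ks2) = adj_steps (id \<circ> s) ks2"
    unfolding foldl_append ks1(2) by simp
  also have "\<dots> = transpose a b \<circ> s" unfolding adj_steps_comp ks2(2) ..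
  finally have "adj_steps id (ks1 @ ks2) = transpose a b \<circ> s" .
  then show ?case
  proof (intro exI[of _ "ks1 @ ks2"] conjI)
    show "\<forall>k\<in>set (ks1 @ ks2). 1 \<le> k \<and> k \<le> n - 1" using ks1(1) ks2(1) by auto
  qed
qed

lemma adj_dist_attained:
  assumes "p permutes {1..n}" "q permutes {1..n}"
  shows "\<exists>ks. length ks = adj_dist n p q \<and> (\<forall>k\<in>set ks. 1 \<le> k \<and> k \<le> n - 1) \<and> adj_steps p ks = q"
proof -
  have "q \<circ> inv p permutes {1..n}" using permutes_compose[OF permutes_inv[OF assms(1)] assms(2)] .
  then obtain ks where ks: "\<forall>k\<in>set ks. 1 \<le> k \<and> k \<le> n - 1" "adj_steps id ks = q \<circ> inv p"
    using permutes_eq_adj_steps by blast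
  have "adj_steps p ks = q \<circ> inv p \<circ> p" using adj_steps_comp[of id p ks] ks(2) by simp
  also have "\<dots> = q" using permutes_inv_o(2)[OF assms(1)] by (simp add: comp_assoc)
  finally have "\<exists>m ks. length ks = m \<and> (\<forall>k\<in>set ks. 1 \<le> k \<and> k \<le> n - 1) \<and> adj_steps p ks = q"
    using ks(1) by blast
  then show ?thesis unfolding adj_dist_def by (rule LeastI_ex)
qed

theorem theorem5:
  fixes n t :: nat and p q :: "nat \<Rightarrow> nat"
  assumes "p permutes {1..n}" and "q permutes {1..n}"
    and "adj_dist n p q = t"
  shows "Delta n (rsk_shape n p) (rsk_shape n q) \<le> real t * sqrt (real n / 2)"
proof -
  obtain ks where "length ks = t" "\<forall>k\<in>set ks. 1 \<le> k \<and> k \<le> n - 1" "adj_steps p ks = q"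
    using adj_dist_attained[OF assms(1,2)] assms(3) by blast
  then show ?thesis using Delta_rsk_shape_adj_steps[OF assms(1)] by blast
qed

end
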